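(* The proof system $\mathbf{ELCR}^-$ is sound for $\mathsf{ELCR}^-$: every formula of $\mathcal{L}^-$ derivable in $\mathbf{ELCR}^-$ is valid on the class of all $k$-sight models.
   Context: Fix a natural number $k$ and a vocabulary: $Pred$ (predicate symbols with arities, containing binary $R$), a nonempty finite set $Cons$ of constants, $Var=\{x,y\}$; terms $\mathsf{Term}=Cons\cup Var$. $\mathcal{L}_{\mathsf{B}}$: $\alpha::=P(t_1,\dots,t_m)\mid t_1\equiv t_2\mid\neg\alpha\mid(\alpha\land\alpha)$. $\mathcal{L}^-$: $\varphi::=\alpha\mid K_zt\mid\neg\varphi\mid(\varphi\land\varphi)\mid K_z\alpha$ with $\alpha\in\mathcal{L}_{\mathsf{B}}$, $z\in Var$, $t\in\mathsf{Term}$. $\langle K_z\rangle\beta:=\neg K_z\neg\beta$; $K_z\mathcal{T}:=\bigwedge_{t\in\mathcal{T}}K_zt$; $\alpha[t_1/t_2]$ replaces every occurrence of $t_2$ in $\alpha$ by $t_1$; $t\not\equiv c:=\neg t\equiv c$; $\mathsf{D}^0t_1t_2:=t_1\equiv t_2$, $\mathsf{D}^{n+1}t_1t_2:=\mathsf{D}^nt_1t_2\lor\bigvee_{t\in\mathsf{Term}}(\mathsf{D}^nt_1t\land(Rtt_2\lor Rt_2t))$; for $\mathcal{T}\subseteq Cons$, $K_zz'=\mathcal{T}:=\bigwedge_{c\in\mathcal{T}}\langle K_z\rangle z'\equiv c\land\bigwedge_{c\in Cons\setminus\mathcal{T}}K_z\neg z'\equiv c$. Models: $M=(\mathbf{D},\mathbf{I},\Sigma,\sim)$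 with $\mathbf{D}$ nonempty finite; $\mathbf{I}(P)\subseteq\mathbf{D}^m$ for $m$-ary $P$, $\mathbf{R}:=\mathbf{I}(R)$ serial; $\mathbf{I}(c)\in\mathbf{D}$ for $c\in Cons$, every element of $\mathbf{D}$ named by some constant; $\Sigma\subseteq\mathbf{D}^{Var}$ nonempty (situations); $\sim_x,\sim_y$ equivalence relations on $\Sigma$. $\mathbb{D}^0(s)=\{s\}$, $\mathbb{D}^{m+1}(s)=\mathbb{D}^m(s)\cup\{t:\exists u\in\mathbb{D}^m(s),(u,t)\in\mathbf{R}\text{ or }(t,u)\in\mathbf{R}\}$. $M$ is $k$-sight if $\sigma\sim_z\sigma'$ implies $\sigma(z')=\sigma'(z')$ for every $z'\in Var$ with $\sigma(z')\in\mathbb{D}^k(\sigma(z))$. Semantics: $t^{(\mathbf{I},\sigma)}$ is $\mathbf{I}(t)$ or $\sigma(t)$; $P(t_1,\dots,t_m)$ true iff the tuple of values is in $\mathbf{I}(P)$; $t_1\equiv t_2$ iff equal values; Boolean standard; $K_zt$ true at $\sigma$ iff $t$ has the same value at all $\sigma'\in\Sigma$ with $\sigma'\sim_z\sigma$; $K_z\varphi$ true at $\sigma$ iff $\varphi$ true at all $\sigma'\in\Sigma$ with $\sigma'\sim_z\sigma$. Valid = true at every situation of every $k$-sight model. $\mathbf{ELCR}^-$ has axioms and rules (with $z,z'\in Var$, $t,t_i\in\mathsf{Term}$, $c\in Cons$): (Tau) propositional tautologies; (A1) $t_1\equiv t_1$; (A2) $t_1\equiv t_2\to t_2\equiv t_1$;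 (A3) $t_1\equiv t_2\land t_2\equiv t_3\to t_1\equiv t_3$; (A4) $t_1\equiv t_2\to(\alpha\leftrightarrow\alpha[t_1/t_2])$ for $\alpha\in\mathcal{L}_{\mathsf{B}}$; (MP) from $\varphi\to\psi$ and $\varphi$ infer $\psi$; (Seriality) $\bigvee_{t\in Cons}Rct$; (At-Some-Where) $\bigvee_{c\in Cons}z\equiv c$; ($k$-sight) $\mathsf{D}^kzt\to K_zt$; (K) $K_z(\alpha\to\beta)\to(K_z\alpha\to K_z\beta)$, $\alpha,\beta\in\mathcal{L}_{\mathsf{B}}$; (T) $K_z\alpha\to\alpha$, $\alpha\in\mathcal{L}_{\mathsf{B}}$; (Knowledge-Ground) $K_zz'=\mathcal{T}\to(K_z\alpha\leftrightarrow\bigwedge_{c\in\mathcal{T}}\alpha[c/z'])$ for $\mathcal{T}\subseteq Cons$, $\{z,z'\}=\{x,y\}$, $\alpha\in\mathcal{L}_{\mathsf{B}}$; (K-Additivity) from $\varphi\to\alpha$ infer $\varphi\to K_z\alpha$, where $\varphi=K_z\alpha_1\land\dots\land K_z\alpha_n\land\langle K_z\rangle\beta_1\land\dots\land\langle K_z\rangle\beta_m$, $1\le m+n$, $\alpha,\alpha_i,\beta_j\in\mathcal{L}_{\mathsf{B}}$; (K-Elimination) from $\varphi\to(K_z\alpha\to\beta)$ infer $\varphi\to(\alpha\to\beta)$, where $\varphi=K_{z'}\alpha_1\land\dots\land K_{z'}\alpha_n\land\langle K_{z'}\rangle\beta_1\land\dots\land\langle K_{z'}\rangle\beta_m$, $1\le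 m+n$, $\alpha,\beta,\alpha_i,\beta_j\in\mathcal{L}_{\mathsf{B}}$, $\{z,z'\}=\{x,y\}$; (De-Re-Knowledge) $t\equiv c\to(K_zt\leftrightarrow K_zt\equiv c)$; (Structure-Knowledge) $(K_z\mathcal{T}\land\alpha)\to K_z\alpha$ for $\alpha\in\mathcal{L}_{\mathsf{B}}$ all of whose terms lie in $\mathcal{T}\subseteq\mathsf{Term}$. *)

theory Defs
  imports Main
begin

datatype var = X | Y

datatype 'c trm = Cn 'c | Vr var

text \<open>One datatype for formulas; L_B and L^- are carved out by the predicates isB / inL.
  Kt z t is K_z t (knowing a term), Kb z a is K_z a (knowing a formula).\<close>
datatype ('p, 'c) fm =
    Atom 'p "'c trm list"
  | Eq "'c trm" "'c trm"
  | Neg "('p, 'c) fm"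
  | Conj2 "('p, 'c) fm" "('p, 'c) fm"
  | Kt var "'c trm"
  | Kb var "('p, 'c) fm"

fun isB :: "('p \<Rightarrow> nat) \<Rightarrow> ('p, 'c) fm \<Rightarrow> bool" where
  "isB ar (Atom P ts) = (length ts = ar P)"
| "isB ar (Eq t1 t2) = True"
| "isB ar (Neg a) = isB ar a"
| "isB ar (Conj2 a b) = (isB ar a \<and> isB ar b)"
| "isB ar (Kt z t) = False"
| "isB ar (Kb z a) = False"

fun inL :: "('p \<Rightarrow> nat) \<Rightarrow> ('p, 'c) fm \<Rightarrow> bool" where
  "inL ar (Atom P ts) = (length ts = ar P)"
| "inL ar (Eq t1 t2) = True"
| "inL ar (Neg a) = inL ar a"
| "inL ar (Conj2 a b) = (inL ar a \<and> inL ar b)"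
| "inL ar (Kt z t) = True"
| "inL ar (Kb z a) = isB ar a"

definition Top :: "('p, 'c) fm" where
  "Top = Neg (Conj2 (Eq (Vr X) (Vr X)) (Neg (Eq (Vr X) (Vr X))))"

definition Or :: "('p, 'c) fm \<Rightarrow> ('p, 'c) fm \<Rightarrow> ('p, 'c) fm" where
  "Or a b = Neg (Conj2 (Neg a) (Neg b))"

definition Imp :: "('p, 'c) fm \<Rightarrow> ('p, 'c) fm \<Rightarrow> ('p, 'c) fm" where
  "Imp a b = Neg (Conj2 a (Neg b))"

definition Iff :: "('p, 'c) fm \<Rightarrow> ('p, 'c) fm \<Rightarrow> ('p, 'c) fm" where
  "Iff a b = Conj2 (Imp a b) (Imp b a)"

definition Dia :: "var \<Rightarrow> ('p, 'c) fm \<Rightarrow> ('p, 'c) fm" where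
  "Dia z b = Neg (Kb z (Neg b))"

fun BigAnd :: "('p, 'c) fm list \<Rightarrow> ('p, 'c) fm" where
  "BigAnd [] = Top"
| "BigAnd [a] = a"
| "BigAnd (a # as) = Conj2 a (BigAnd as)"

fun BigOr :: "('p, 'c) fm list \<Rightarrow> ('p, 'c) fm" where
  "BigOr [] = Neg Top"
| "BigOr [a] = a"
| "BigOr (a # as) = Or a (BigOr as)"

definition allcons :: "'c::enum list" where
  "allcons = Enum.enum"

definition allterms :: "'c::enum trm list" where
  "allterms = map Cn allcons @ [Vr X, Vr Y]"

text \<open>Substitution a[t1/t2]: replace every occurrence of term t2 by t1.\<close>
definition trep :: "'c trm \<Rightarrow> 'c trm \<Rightarrow> 'c trm \<Rightarrow> 'c trm" where
  "trep t1 t2 s = (if s = t2 then t1 else s)"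

fun subst :: "('p, 'c) fm \<Rightarrow> 'c trm \<Rightarrow> 'c trm \<Rightarrow> ('p, 'c) fm" where
  "subst (Atom P ts) t1 t2 = Atom P (map (trep t1 t2) ts)"
| "subst (Eq s1 s2) t1 t2 = Eq (trep t1 t2 s1) (trep t1 t2 s2)"
| "subst (Neg a) t1 t2 = Neg (subst a t1 t2)"
| "subst (Conj2 a b) t1 t2 = Conj2 (subst a t1 t2) (subst b t1 t2)"
| "subst (Kt z s) t1 t2 = Kt z (trep t1 t2 s)"
| "subst (Kb z a) t1 t2 = Kb z (subst a t1 t2)"

fun trms :: "('p, 'c) fm \<Rightarrow> 'c trm set" where
  "trms (Atom P ts) = set ts"
| "trms (Eq s1 s2) = {s1, s2}"
| "trms (Neg a) = trms a"
| "trms (Conj2 a b) = trms a \<union> trms b"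
| "trms (Kt z s) = {s}"
| "trms (Kb z a) = trms a"

fun Dn :: "'p \<Rightarrow> nat \<Rightarrow> 'c::enum trm \<Rightarrow> 'c trm \<Rightarrow> ('p, 'c) fm" where
  "Dn R 0 t1 t2 = Eq t1 t2"
| "Dn R (Suc n) t1 t2 =
     Or (Dn R n t1 t2)
        (BigOr (map (\<lambda>t. Conj2 (Dn R n t1 t) (Or (Atom R [t, t2]) (Atom R [t2, t]))) allterms))"

definition KT :: "var \<Rightarrow> 'c::enum trm set \<Rightarrow> ('p, 'c) fm" where
  "KT z T = BigAnd (map (Kt z) (filter (\<lambda>t. t \<in> T) allterms))"

definition KEq :: "var \<Rightarrow> var \<Rightarrow> 'c::enum set \<Rightarrow> ('p, 'c) fm" where
  "KEq z z' T = Conj2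
     (BigAnd (map (\<lambda>c. Dia z (Eq (Vr z') (Cn c))) (filter (\<lambda>c. c \<in> T) allcons)))
     (BigAnd (map (\<lambda>c. Kb z (Neg (Eq (Vr z') (Cn c)))) (filter (\<lambda>c. c \<notin> T) allcons)))"

definition Kprefix :: "var \<Rightarrow> ('p, 'c) fm list \<Rightarrow> ('p, 'c) fm list \<Rightarrow> ('p, 'c) fm" where
  "Kprefix z as bs = BigAnd (map (Kb z) as @ map (Dia z) bs)"

definition other :: "var \<Rightarrow> var" where
  "other z = (if z = X then Y else X)"

fun pval :: "(('p, 'c) fm \<Rightarrow> bool) \<Rightarrow> ('p, 'c) fm \<Rightarrow> bool" where
  "pval v (Neg a) = (\<not> pval v a)"
| "pval v (Conj2 a b) = (pval v a \<and> pval v b)"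
| "pval v a = v a"

definition tautology :: "('p, 'c) fm \<Rightarrow> bool" where
  "tautology a = (\<forall>v. pval v a)"

inductive derivable :: "('p \<Rightarrow> nat) \<Rightarrow> 'p \<Rightarrow> nat \<Rightarrow> ('p, 'c::enum) fm \<Rightarrow> bool"
  for ar :: "'p \<Rightarrow> nat" and R :: 'p and k :: nat where
  Tau: "inL ar a \<Longrightarrow> tautology a \<Longrightarrow> derivable ar R k a"
| A1: "derivable ar R k (Eq t1 t1)"
| A2: "derivable ar R k (Imp (Eq t1 t2) (Eq t2 t1))"
| A3: "derivable ar R k (Imp (Conj2 (Eq t1 t2) (Eq t2 t3)) (Eq t1 t3))"
| A4: "isB ar a \<Longrightarrow> derivable ar R k (Imp (Eq t1 t2) (Iff a (subst a t1 t2)))"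
| MP: "derivable ar R k (Imp a b) \<Longrightarrow> derivable ar R k a \<Longrightarrow> derivable ar R k b"
| Seriality: "derivable ar R k (BigOr (map (\<lambda>t. Atom R [Cn c, Cn t]) allcons))"
| AtSomeWhere: "derivable ar R k (BigOr (map (\<lambda>c. Eq (Vr z) (Cn c)) allcons))"
| KSight: "derivable ar R k (Imp (Dn R k (Vr z) t) (Kt z t))"
| K: "isB ar a \<Longrightarrow> isB ar b \<Longrightarrow>
      derivable ar R k (Imp (Kb z (Imp a b)) (Imp (Kb z a) (Kb z b)))"
| T: "isB ar a \<Longrightarrow> derivable ar R k (Imp (Kb z a) a)"
| KnowledgeGround: "isB ar a \<Longrightarrow> z' = other z \<Longrightarrow>
      derivable ar R k (Imp (KEq z z' T)
        (Iff (Kb z a) (BigAnd (map (\<lambda>c. subst a (Cn c) (Vr z')) (filter (\<lambda>c. c \<in> T) allcons)))))"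
| KAdditivity: "\<forall>a\<in>set as. isB ar a \<Longrightarrow> \<forall>b\<in>set bs. isB ar b \<Longrightarrow> isB ar a \<Longrightarrow>
      1 \<le> length as + length bs \<Longrightarrow>
      derivable ar R k (Imp (Kprefix z as bs) a) \<Longrightarrow>
      derivable ar R k (Imp (Kprefix z as bs) (Kb z a))"
| KElimination: "\<forall>a\<in>set as. isB ar a \<Longrightarrow> \<forall>b\<in>set bs. isB ar b \<Longrightarrow> isB ar a \<Longrightarrow> isB ar b \<Longrightarrow>
      1 \<le> length as + length bs \<Longrightarrow> z' = other z \<Longrightarrow>
      derivable ar R k (Imp (Kprefix z' as bs) (Imp (Kb z a) b)) \<Longrightarrow>
      derivable ar R k (Imp (Kprefix z' as bs) (Imp a b))"
| DeReKnowledge: "derivable ar R k (Imp (Eq t (Cn c)) (Iff (Kt z t) (Kb z (Eq t (Cn c)))))"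
| StructureKnowledge: "isB ar a \<Longrightarrow> trms a \<subseteq> T \<Longrightarrow>
      derivable ar R k (Imp (Conj2 (KT z T) a) (Kb z a))"

record ('p, 'c, 'd) model =
  Dom :: "'d set"
  Ip :: "'p \<Rightarrow> 'd list set"
  Ic :: "'c \<Rightarrow> 'd"
  Sit :: "(var \<Rightarrow> 'd) set"
  Sim :: "var \<Rightarrow> ((var \<Rightarrow> 'd) \<times> (var \<Rightarrow> 'd)) set"

definition Rrel :: "('p, 'c, 'd) model \<Rightarrow> 'p \<Rightarrow> ('d \<times> 'd) set" where
  "Rrel M R = {(a, b). [a, b] \<in> Ip M R}"

fun Dset :: "('p, 'c, 'd) model \<Rightarrow> 'p \<Rightarrow> nat \<Rightarrow> 'd \<Rightarrow> 'd set" where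
  "Dset M R 0 s = {s}"
| "Dset M R (Suc m) s = Dset M R m s \<union>
     {t. \<exists>u\<in>Dset M R m s. (u, t) \<in> Rrel M R \<or> (t, u) \<in> Rrel M R}"

definition is_model :: "('p \<Rightarrow> nat) \<Rightarrow> 'p \<Rightarrow> ('p, 'c, 'd) model \<Rightarrow> bool" where
  "is_model ar R M \<longleftrightarrow>
     Dom M \<noteq> {} \<and> finite (Dom M) \<and>
     (\<forall>P. \<forall>xs\<in>Ip M P. length xs = ar P \<and> set xs \<subseteq> Dom M) \<and>
     (\<forall>a\<in>Dom M. \<exists>b. (a, b) \<in> Rrel M R) \<and>
     (\<forall>c. Ic M c \<in> Dom M) \<and>
     (\<forall>d\<in>Dom M. \<exists>c. Ic M c = d) \<and>
     Sit M \<noteq> {} \<and> (\<forall>\<sigma>\<in>Sit M. \<forall>z. \<sigma> z \<in> Dom M) \<and>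
     (\<forall>z. equiv (Sit M) (Sim M z))"

definition ksight :: "'p \<Rightarrow> nat \<Rightarrow> ('p, 'c, 'd) model \<Rightarrow> bool" where
  "ksight R k M \<longleftrightarrow>
     (\<forall>z \<sigma> \<sigma>'. (\<sigma>, \<sigma>') \<in> Sim M z \<longrightarrow>
        (\<forall>z'. \<sigma> z' \<in> Dset M R k (\<sigma> z) \<longrightarrow> \<sigma> z' = \<sigma>' z'))"

definition k_sight_model :: "('p \<Rightarrow> nat) \<Rightarrow> 'p \<Rightarrow> nat \<Rightarrow> ('p, 'c, 'd) model \<Rightarrow> bool" where
  "k_sight_model ar R k M \<longleftrightarrow> is_model ar R M \<and> ksight R k M"

fun tval :: "('p, 'c, 'd) model \<Rightarrow> (var \<Rightarrow> 'd) \<Rightarrow> 'c trm \<Rightarrow> 'd" where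
  "tval M \<sigma> (Cn c) = Ic M c"
| "tval M \<sigma> (Vr z) = \<sigma> z"

fun sat :: "('p, 'c, 'd) model \<Rightarrow> (var \<Rightarrow> 'd) \<Rightarrow> ('p, 'c) fm \<Rightarrow> bool" where
  "sat M \<sigma> (Atom P ts) = (map (tval M \<sigma>) ts \<in> Ip M P)"
| "sat M \<sigma> (Eq t1 t2) = (tval M \<sigma> t1 = tval M \<sigma> t2)"
| "sat M \<sigma> (Neg a) = (\<not> sat M \<sigma> a)"
| "sat M \<sigma> (Conj2 a b) = (sat M \<sigma> a \<and> sat M \<sigma> b)"
| "sat M \<sigma> (Kt z t) = (\<forall>\<sigma>'\<in>Sit M. (\<sigma>', \<sigma>) \<in> Sim M z \<longrightarrow> tval M \<sigma>' t = tval M \<sigma> t)"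
| "sat M \<sigma> (Kb z a) = (\<forall>\<sigma>'\<in>Sit M. (\<sigma>', \<sigma>) \<in> Sim M z \<longrightarrow> sat M \<sigma>' a)"

text \<open>Validity on the class of k-sight models whose domain is drawn from type 'd
  (the theorem below is universally quantified over 'd).\<close>
definition valid :: "('p \<Rightarrow> nat) \<Rightarrow> 'p \<Rightarrow> nat \<Rightarrow> 'd itself \<Rightarrow> ('p, 'c) fm \<Rightarrow> bool" where
  "valid ar R k (_ :: 'd itself) a \<longleftrightarrow>
     (\<forall>(M :: ('p, 'c, 'd) model) \<sigma>. k_sight_model ar R k M \<longrightarrow> \<sigma> \<in> Sit M \<longrightarrow> sat M \<sigma> a)"

end

theory Submission
  imports Defs
begin

(* Soundness is proved by induction on derivations, simultaneously for all k-sight models.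
   Knowledge-Ground rests on 0-sight: z-indistinguishable situations agree on z, so they
   differ at most in the value of z', and K_z z' = T says these values are exactly the objects
   named in T. K-Elimination is sound because its premise may be evaluated in the modified model
   where z distinguishes all situations: there K_z \<alpha> collapses to \<alpha>, while the
   K_z'-prefix and the basic formulas are unaffected. *)

lemma sat_Top [simp]: "sat M \<sigma> Top"
  by (simp add: Top_def)

lemma sat_Or [simp]: "sat M \<sigma> (Or a b) = (sat M \<sigma> a \<or> sat M \<sigma> b)"
  by (simp add: Or_def)

lemma sat_Imp [simp]: "sat M \<sigma> (Imp a b) = (sat M \<sigma> a \<longrightarrow> sat M \<sigma> b)"
  by (simp add: Imp_def)

lemma sat_Iff [simp]: "sat M \<sigma> (Iff a b) = (sat M \<sigma> a \<longleftrightarrow> sat M \<sigma> b)"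
  by (auto simp add: Iff_def)

lemma sat_Dia [simp]:
  "sat M \<sigma> (Dia z a) = (\<exists>\<sigma>'\<in>Sit M. (\<sigma>', \<sigma>) \<in> Sim M z \<and> sat M \<sigma>' a)"
  by (simp add: Dia_def)

lemma sat_BigAnd [simp]: "sat M \<sigma> (BigAnd l) = (\<forall>a\<in>set l. sat M \<sigma> a)"
  by (induction l rule: BigAnd.induct) auto

lemma sat_BigOr [simp]: "sat M \<sigma> (BigOr l) = (\<exists>a\<in>set l. sat M \<sigma> a)"
  by (induction l rule: BigOr.induct) (auto simp: Top_def)

lemma sat_Kprefix:
  "sat M \<sigma> (Kprefix z as bs) \<longleftrightarrow>
     (\<forall>a\<in>set as. sat M \<sigma> (Kb z a)) \<and> (\<forall>b\<in>set bs. sat M \<sigma> (Dia z b))"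
  unfolding Kprefix_def sat_BigAnd set_append set_map by blast

lemma pval_sat: "pval (sat M \<sigma>) a = sat M \<sigma> a"
  by (induction a) auto

lemma sat_tautology: "tautology a \<Longrightarrow> sat M \<sigma> a"
  unfolding tautology_def by (metis pval_sat)

lemma in_allcons [simp]: "c \<in> set (allcons :: 'c::enum list)"
  by (simp add: allcons_def enum_UNIV)

lemma in_allterms [simp]: "t \<in> set (allterms :: 'c::enum trm list)"
proof (cases t)
  case (Vr w)
  then show ?thesis
    by (cases w) (simp_all add: allterms_def)
qed (simp add: allterms_def)

lemma other_neq: "other z \<noteq> z"
  by (cases z) (auto simp: other_def)

lemma var_eq_or_other: "w = z \<or> w = other z"
  by (cases w; cases z) (auto simp: other_def)

lemma sat_cong_trms:
  assumes "isB ar a" and "\<And>t. t \<in> trms a \<Longrightarrow> tval M \<sigma>' t = tval M \<sigma> t"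
  shows "sat M \<sigma>' a = sat M \<sigma> a"
  using assms
proof (induction a)
  case (Atom P ts)
  then have "map (tval M \<sigma>') ts = map (tval M \<sigma>) ts"
    by simp
  then show ?case
    by (simp only: sat.simps)
qed auto

lemma sat_subst:
  assumes "isB ar a" and "\<And>s. tval M \<sigma>' s = tval M \<sigma> (trep t1 t2 s)"
  shows "sat M \<sigma> (subst a t1 t2) = sat M \<sigma>' a"
  using assms
proof (induction a)
  case (Atom P ts)
  then have "map (tval M \<sigma>) (map (trep t1 t2) ts) = map (tval M \<sigma>') ts"
    by simp
  then show ?case
    by (simp del: map_map)
qed auto

lemma sat_subst_Vr:
  assumes "isB ar a"
  shows "sat M \<sigma> (subst a (Cn c) (Vr z)) = sat M (\<sigma>(z := Ic M c)) a"
proof (rule sat_subst[OF assms])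
  fix s
  show "tval M (\<sigma>(z := Ic M c)) s = tval M \<sigma> (trep (Cn c) (Vr z) s)"
    by (cases s) (auto simp: trep_def)
qed

lemma tval_Sim_update [simp]: "tval (M\<lparr>Sim := S\<rparr>) = tval M"
proof (intro ext)
  show "tval (M\<lparr>Sim := S\<rparr>) \<sigma> t = tval M \<sigma> t" for \<sigma> t
    by (cases t) simp_all
qed

lemma sat_Sim_update: "isB ar a \<Longrightarrow> sat (M\<lparr>Sim := S\<rparr>) \<sigma> a = sat M \<sigma> a"
  by (induction a) simp_all

lemma k_sight_model_equiv: "k_sight_model ar R k M \<Longrightarrow> equiv (Sit M) (Sim M z)"
  by (simp add: k_sight_model_def is_model_def)

lemma k_sight_model_named:
  "k_sight_model ar R k M \<Longrightarrow> \<sigma> \<in> Sit M \<Longrightarrow> \<exists>c. Ic M c = \<sigma> z"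
  unfolding k_sight_model_def is_model_def by blast

lemma k_sight_model_serial:
  assumes "k_sight_model ar R k M"
  shows "\<exists>c'. (Ic M c, Ic M c') \<in> Rrel M R"
proof -
  have model: "is_model ar R M"
    using assms by (simp add: k_sight_model_def)
  then obtain d where d: "(Ic M c, d) \<in> Rrel M R"
    unfolding is_model_def by blast
  then have "set [Ic M c, d] \<subseteq> Dom M"
    using model unfolding is_model_def Rrel_def by blast
  then have "d \<in> Dom M"
    by simp
  then show ?thesis
    using d model unfolding is_model_def by metis
qed

lemma Dset_refl: "s \<in> Dset M R n s"
  by (induction n) auto

lemma Dset_Sim_update [simp]: "Dset (M\<lparr>Sim := S\<rparr>) R n s = Dset M R n s"
  by (induction n) (auto simp: Rrel_def)

lemma sat_Dn_imp_Dset: "sat M \<sigma> (Dn R n t1 t2) \<Longrightarrow> tval M \<sigma> t2 \<in> Dset M R n (tval M \<sigma> t1)"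
proof (induction n arbitrary: t2)
  case (Suc n)
  then show ?case
    by (auto simp: Rrel_def)
qed simp

lemma sat_Kt_of_Dset:
  assumes "k_sight_model ar R k M" and "tval M \<sigma> t \<in> Dset M R k (\<sigma> z)"
  shows "sat M \<sigma> (Kt z t)"
proof (cases t)
  case (Vr w)
  have "\<sigma>' w = \<sigma> w" if "(\<sigma>', \<sigma>) \<in> Sim M z" for \<sigma>'
  proof -
    have "(\<sigma>, \<sigma>') \<in> Sim M z"
      using that k_sight_model_equiv[OF assms(1)] by (meson equivE symE)
    then show ?thesis
      using assms Vr unfolding k_sight_model_def ksight_def by fastforce
  qed
  then show ?thesis
    using Vr by simp
qed simp

lemma k_sight_model_Sim_eq_except:
  assumes "k_sight_model ar R k M" and "(\<sigma>', \<sigma>) \<in> Sim M z"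
  shows "\<sigma>' = \<sigma>(other z := \<sigma>' (other z))"
proof
  fix w
  have "\<sigma>' \<in> Sit M"
    using assms(2) k_sight_model_equiv[OF assms(1)] by (auto simp: equiv_def refl_on_def)
  moreover have "sat M \<sigma> (Kt z (Vr z))"
    by (rule sat_Kt_of_Dset[OF assms(1)]) (simp add: Dset_refl)
  ultimately have "\<sigma>' z = \<sigma> z"
    using assms(2) by simp
  then show "\<sigma>' w = (\<sigma>(other z := \<sigma>' (other z))) w"
    using var_eq_or_other[of w z] by auto
qed

lemma sat_KEq_values:
  assumes "k_sight_model ar R k M" and "sat M \<sigma> (KEq z z' T)"
  shows "{\<sigma>' z' |\<sigma>'. \<sigma>' \<in> Sit M \<and> (\<sigma>', \<sigma>) \<in> Sim M z} = Ic M ` T"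
proof (intro equalityI subsetI)
  fix d
  assume "d \<in> {\<sigma>' z' |\<sigma>'. \<sigma>' \<in> Sit M \<and> (\<sigma>', \<sigma>) \<in> Sim M z}"
  then obtain \<sigma>' where \<sigma>': "\<sigma>' \<in> Sit M" "(\<sigma>', \<sigma>) \<in> Sim M z" and d: "d = \<sigma>' z'"
    by blast
  obtain c where c: "Ic M c = d"
    using k_sight_model_named[OF assms(1) \<sigma>'(1)] d by blast
  have "c \<in> T"
  proof (rule ccontr)
    assume "c \<notin> T"
    then have "sat M \<sigma> (Kb z (Neg (Eq (Vr z') (Cn c))))"
      using assms(2) unfolding KEq_def by auto
    then show False
      using \<sigma>' c d by auto
  qed
  then show "d \<in> Ic M ` T"
    using c by blast
next
  fix d
  assume "d \<in> Ic M ` T"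
  then show "d \<in> {\<sigma>' z' |\<sigma>'. \<sigma>' \<in> Sit M \<and> (\<sigma>', \<sigma>) \<in> Sim M z}"
    using assms(2) unfolding KEq_def by fastforce
qed

lemma sat_KnowledgeGround:
  assumes "k_sight_model ar R k M" and "isB ar a" and "sat M \<sigma> (KEq z (other z) T)"
  shows "sat M \<sigma> (Kb z a) \<longleftrightarrow>
    (\<forall>c\<in>T. sat M \<sigma> (subst a (Cn c) (Vr (other z))))"
proof -
  let ?z' = "other z"
  have z'_only: "sat M \<sigma>' a = sat M (\<sigma>(?z' := \<sigma>' ?z')) a" if "(\<sigma>', \<sigma>) \<in> Sim M z" for \<sigma>'
    using k_sight_model_Sim_eq_except[OF assms(1) that] by (rule arg_cong)
  have "sat M \<sigma> (Kb z a) \<longleftrightarrow>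
      (\<forall>\<sigma>'\<in>Sit M. (\<sigma>', \<sigma>) \<in> Sim M z \<longrightarrow> sat M (\<sigma>(?z' := \<sigma>' ?z')) a)"
    unfolding sat.simps(6) using z'_only by blast
  also have "\<dots> \<longleftrightarrow>
      (\<forall>d\<in>{\<sigma>' ?z' |\<sigma>'. \<sigma>' \<in> Sit M \<and> (\<sigma>', \<sigma>) \<in> Sim M z}. sat M (\<sigma>(?z' := d)) a)"
    by blast
  also have "\<dots> \<longleftrightarrow> (\<forall>d\<in>Ic M ` T. sat M (\<sigma>(?z' := d)) a)"
    by (simp only: sat_KEq_values[OF assms(1,3)])
  also have "\<dots> \<longleftrightarrow> (\<forall>c\<in>T. sat M \<sigma> (subst a (Cn c) (Vr ?z')))"
    by (simp add: sat_subst_Vr[OF assms(2)])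
  finally show ?thesis .
qed

lemma sat_Kb_Sim_cong:
  assumes "equiv (Sit M) (Sim M z)" and "(\<sigma>, \<sigma>') \<in> Sim M z"
  shows "sat M \<sigma> (Kb z a) = sat M \<sigma>' (Kb z a)"
proof -
  have "(\<sigma>'', \<sigma>) \<in> Sim M z \<longleftrightarrow> (\<sigma>'', \<sigma>') \<in> Sim M z" for \<sigma>''
    using assms unfolding equiv_def by (meson symE transE)
  then show ?thesis
    by simp
qed

lemma sat_Kprefix_Sim_cong:
  assumes "equiv (Sit M) (Sim M z)" and "(\<sigma>, \<sigma>') \<in> Sim M z"
  shows "sat M \<sigma> (Kprefix z as bs) = sat M \<sigma>' (Kprefix z as bs)"
  using sat_Kb_Sim_cong[OF assms] unfolding sat_Kprefix Dia_def sat.simps(3) by blast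

lemma sat_Kb_of_Kprefix:
  assumes "equiv (Sit M) (Sim M z)"
    and "\<forall>\<sigma>\<in>Sit M. sat M \<sigma> (Kprefix z as bs) \<longrightarrow> sat M \<sigma> a"
    and "sat M \<sigma> (Kprefix z as bs)"
  shows "sat M \<sigma> (Kb z a)"
proof -
  have "(\<sigma>', \<sigma>) \<in> Sim M z \<Longrightarrow> sat M \<sigma>' (Kprefix z as bs)" for \<sigma>'
    using assms(3) sat_Kprefix_Sim_cong[OF assms(1)] by blast
  then show ?thesis
    using assms(2) by simp
qed

lemma sat_Kb_of_trms_known:
  assumes "isB ar a" and "trms a \<subseteq> T" and "sat M \<sigma> (KT z T)" and "sat M \<sigma> a"
  shows "sat M \<sigma> (Kb z a)"
proof -
  have "sat M \<sigma>' a" if "(\<sigma>', \<sigma>) \<in> Sim M z" "\<sigma>' \<in> Sit M" for \<sigma>'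
  proof -
    have "tval M \<sigma>' t = tval M \<sigma> t" if "t \<in> trms a" for t
      using assms(2,3) that \<open>(\<sigma>', \<sigma>) \<in> Sim M z\<close> \<open>\<sigma>' \<in> Sit M\<close> unfolding KT_def by auto
    then show ?thesis
      using sat_cong_trms[OF assms(1)] assms(4) by blast
  qed
  then show ?thesis
    by simp
qed

definition omniscient :: "('p, 'c, 'd) model \<Rightarrow> var \<Rightarrow> ('p, 'c, 'd) model" where
  "omniscient M z = M\<lparr>Sim := (Sim M)(z := Id_on (Sit M))\<rparr>"

lemma k_sight_model_omniscient:
  assumes "k_sight_model ar R k M"
  shows "k_sight_model ar R k (omniscient M z)"
proof -
  have "equiv (Sit M) (Id_on (Sit M))"
    unfolding equiv_def refl_on_def sym_def trans_def by auto
  then show ?thesis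
    using assms unfolding omniscient_def k_sight_model_def is_model_def ksight_def Rrel_def
    by (auto simp: Id_on_def)
qed

lemma Sit_omniscient [simp]: "Sit (omniscient M z) = Sit M"
  by (simp add: omniscient_def)

lemma Sim_omniscient [simp]:
  "Sim (omniscient M z) w = (if w = z then Id_on (Sit M) else Sim M w)"
  by (simp add: omniscient_def)

lemma sat_omniscient_isB: "isB ar a \<Longrightarrow> sat (omniscient M z) \<sigma> a = sat M \<sigma> a"
  unfolding omniscient_def by (rule sat_Sim_update)

lemma sat_omniscient_Kb:
  "isB ar a \<Longrightarrow> \<sigma> \<in> Sit M \<Longrightarrow> sat (omniscient M z) \<sigma> (Kb z a) = sat M \<sigma> a"
  by (auto simp: sat_omniscient_isB)

lemma sat_omniscient_Kprefix:
  assumes "\<forall>a\<in>set as. isB ar a" and "\<forall>b\<in>set bs. isB ar b" and "w \<noteq> z"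
  shows "sat (omniscient M z) \<sigma> (Kprefix w as bs) = sat M \<sigma> (Kprefix w as bs)"
  using assms by (auto simp: sat_Kprefix sat_omniscient_isB[of ar])

lemma derivable_sound:
  fixes M :: "('p, 'c::enum, 'd) model"
  assumes "derivable ar R k \<phi>" and "k_sight_model ar R k M" and "\<sigma> \<in> Sit M"
  shows "sat M \<sigma> \<phi>"
  using assms
proof (induction arbitrary: M \<sigma> rule: derivable.induct)
  case (Tau a)
  then show ?case
    by (simp add: sat_tautology)
next
  case (A4 a t1 t2)
  then show ?case
    using sat_subst[of ar a M \<sigma> \<sigma> t1 t2] by (auto simp: trep_def)
next
  case (Seriality c)
  then show ?case
    using k_sight_model_serial by (fastforce simp: Rrel_def)
next
  case (AtSomeWhere z)
  then obtain c where "Ic M c = \<sigma> z"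
    using k_sight_model_named by metis
  then show ?case
    by (auto intro!: bexI[of _ c])
next
  case (KSight z t)
  then show ?case
    using sat_Dn_imp_Dset sat_Kt_of_Dset by fastforce
next
  case (T a z)
  then show ?case
    using k_sight_model_equiv[THEN equiv_class_self] by fastforce
next
  case (KnowledgeGround a z' z T)
  then show ?case
    using sat_KnowledgeGround[of ar R k M a \<sigma> z T] by auto
next
  case (KAdditivity as bs a z)
  then show ?case
    using sat_Kb_of_Kprefix[OF k_sight_model_equiv] by (metis sat_Imp)
next
  case (KElimination as bs a b z' z)
  have "z' \<noteq> z"
    using KElimination.hyps(6) other_neq by metis
  have "sat (omniscient M z) \<sigma> (Imp (Kprefix z' as bs) (Imp (Kb z a) b))"
    using KElimination.IH[OF k_sight_model_omniscient] KElimination.prems by simp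
  then show ?case
    by (simp only: sat_Imp sat_omniscient_Kprefix[OF KElimination.hyps(1,2) \<open>z' \<noteq> z\<close>]
        sat_omniscient_Kb[OF KElimination.hyps(3) KElimination.prems(2)]
        sat_omniscient_isB[OF KElimination.hyps(4)])
next
  case (StructureKnowledge a T z)
  then show ?case
    using sat_Kb_of_trms_known[of ar a T M \<sigma> z] by (simp del: sat.simps(6))
qed auto

theorem fact7:
  fixes ar :: "'p \<Rightarrow> nat" and R :: 'p and k :: nat and \<phi> :: "('p, 'c::enum) fm"
  assumes "ar R = 2"
    and "derivable ar R k \<phi>"
  shows "valid ar R k TYPE('d) \<phi>"
  using derivable_sound[OF assms(2)] unfolding valid_def by blast

end
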